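(* Assume $\|\mathbf{x}_t\|_\infty\le1$ for all $t$. Let $\mathbf{v}\in\mathbb{R}^d$ be any vector (fixed given $B_1,\dots,B_{\tau-1}$) and $\mathbf{z}_\tau=\mathbf{h}_{\tau^2}\mathbf{v}-\mathbf{x}_{\tau^2}\mathbf{x}_{\tau^2}^\top\mathbf{v}$. Then for all $i\in[d]$, $$|z_{\tau,i}|\le\frac{(d-1)(d-2)}{(k-1)(k-2)}\|\mathbf{v}\|_1,\qquad\mathbb{E}_\tau[z_{\tau,i}^2]\le\Big(\frac{(d-1)(d-2)}{(k-1)(k-2)}-1\Big)\|\mathbf{v}\|_2^2+\Big(\frac{d-1}{k-1}-1\Big)\big(\|\mathbf{v}\|_1^2-\|\mathbf{v}\|_2^2\big).$$
   Context: Integers $3\le k\le d-3$, $[d]=\{1,\dots,d\}$. SAMPLING$(k,d,\mathbf{w})$ for nonzero $\mathbf{w}\in\mathbb{R}^d$: with $q_i=|w_i|/\|\mathbf{w}\|_1$, draw $I_1\in[d]$ with $\mathbb{P}(I_1=i)=q_i$, then $k-1$ distinct indices uniformly without replacement from $[d]\setminus\{I_1\}$; output the $k$-set $B$. At round $\tau$, $B_\tau=$SAMPLING$(k,d,\hat{\mathbf{w}}_{\tau-1})$ for a nonzero vector $\hat{\mathbf{w}}_{\tau-1}$ determined by $B_1,\dots,B_{\tau-1}$ ($\hat{\mathbf{w}}_0=\frac1d\mathbf{1}_d$). $\mathbb{P}$ and $\mathbb{E}_\tau[\cdot]=\mathbb{E}[\cdot\mid B_1,\dots,B_{\tau-1}]$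 are over $B_\tau$. The instance $\mathbf{x}_{\tau^2}\in\mathbb{R}^d$ is fixed given the past; $h_{\tau^2}[i,i]=\frac{x_{\tau^2,i}^2}{\mathbb{P}[i\in B_\tau]}\mathbb{I}_{i\in B_\tau}$ and $h_{\tau^2}[i,j]=\frac{x_{\tau^2,i}x_{\tau^2,j}}{\mathbb{P}[i,j\in B_\tau]}\mathbb{I}_{i,j\in B_\tau}$ for $i\ne j$. *)

theory Defs
  imports "HOL-Probability.Probability"
begin

text \<open>Vectors in R^d are functions nat => real, indexed by [d] = {1..d}.\<close>

definition l1norm :: "nat \<Rightarrow> (nat \<Rightarrow> real) \<Rightarrow> real" where
  "l1norm d v = (\<Sum>j\<in>{1..d}. \<bar>v j\<bar>)"

definition l2norm_sq :: "nat \<Rightarrow> (nat \<Rightarrow> real) \<Rightarrow> real" where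
  "l2norm_sq d v = (\<Sum>j\<in>{1..d}. (v j)\<^sup>2)"

definition first_index :: "nat \<Rightarrow> (nat \<Rightarrow> real) \<Rightarrow> nat pmf" where
  "first_index d w = embed_pmf (\<lambda>i. if i \<in> {1..d} then \<bar>w i\<bar> / l1norm d w else 0)"

text \<open>SAMPLING(k,d,w): draw I_1, then k-1 distinct indices uniformly without
  replacement from [d] - {I_1} (equivalently a uniform (k-1)-subset).\<close>
definition SAMPLING :: "nat \<Rightarrow> nat \<Rightarrow> (nat \<Rightarrow> real) \<Rightarrow> nat set pmf" where
  "SAMPLING k d w = bind_pmf (first_index d w)
     (\<lambda>i. map_pmf (insert i) (pmf_of_set {S. S \<subseteq> {1..d} - {i} \<and> card S = k - 1}))"

definition hmat :: "nat \<Rightarrow> nat \<Rightarrow> (nat \<Rightarrow> real) \<Rightarrow> (nat \<Rightarrow> real) \<Rightarrow> nat set \<Rightarrow> nat \<Rightarrow> nat \<Rightarrow> real" where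
  "hmat k d w x B i j =
     (if i = j then
        (x i)\<^sup>2 / measure_pmf.prob (SAMPLING k d w) {C. i \<in> C} * (if i \<in> B then 1 else 0)
      else
        x i * x j / measure_pmf.prob (SAMPLING k d w) {C. i \<in> C \<and> j \<in> C}
          * (if i \<in> B \<and> j \<in> B then 1 else 0))"

definition zvec :: "nat \<Rightarrow> nat \<Rightarrow> (nat \<Rightarrow> real) \<Rightarrow> (nat \<Rightarrow> real) \<Rightarrow> (nat \<Rightarrow> real) \<Rightarrow> nat set \<Rightarrow> nat \<Rightarrow> real" where
  "zvec k d w x v B i =
     (\<Sum>j\<in>{1..d}. hmat k d w x B i j * v j) - x i * (\<Sum>j\<in>{1..d}. x j * v j)"

end

theory Submission
  imports Defs
begin

text \<open>Write p_j = P({i,j} \<subseteq> B) and c_j = x_i x_j v_j. Then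
  z_i = \<Sum>_j c_j (1[{i,j} \<subseteq> B] / p_j - 1), so E z_i^2 = \<Sum>_j,l c_j c_l (P({i,j,l} \<subseteq> B) / (p_j p_l) - 1).
  Conditioning on the first index gives P(T \<subseteq> B) = a(|T|) + q(T) (a(|T| - 1) - a(|T|)), where
  a(t) = \<Prod>_r<t (k-1-r)/(d-1-r) is the probability that a uniform (k-1)-subset of d-1 points contains
  a fixed t-set. Hence a(2) \<le> p_j \<le> 1, which bounds each summand of z_i by |v_j| / a(2) and each
  diagonal term of the second moment by (1/a(2) - 1) v_j^2. For j \<noteq> l the ratio
  P({i,j,l} \<subseteq> B) / (p_j p_l) lies in [2 - 1/a(1), 1/a(1)]; this needs a(1) a(3) \<le> a(2)^2 and
  2 a(1) - 1 \<le> a(3)/a(2), which is where k \<ge> 3 and d \<ge> k + 3 enter.\<close>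

section \<open>Inclusion probabilities of uniform random subsets\<close>

lemma card_subsets_superset:
  assumes "finite U" "T \<subseteq> U"
  shows "card {S. S \<subseteq> U \<and> card S = m \<and> T \<subseteq> S}
     = (if card T \<le> m then (card U - card T) choose (m - card T) else 0)"
proof (cases "card T \<le> m")
  case True
  have "finite T" using assms finite_subset by blast
  have "bij_betw (\<lambda>S. S - T) {S. S \<subseteq> U \<and> card S = m \<and> T \<subseteq> S}
      {R. R \<subseteq> U - T \<and> card R = m - card T}"
  proof (rule bij_betw_byWitness[where f'="\<lambda>R. R \<union> T"])
    show "(\<lambda>S. S - T) ` {S. S \<subseteq> U \<and> card S = m \<and> T \<subseteq> S} \<subseteq> {R. R \<subseteq> U - T \<and> card R = m - card T}"
      using \<open>finite T\<close> by (auto simp: card_Diff_subset)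
    show "(\<lambda>R. R \<union> T) ` {R. R \<subseteq> U - T \<and> card R = m - card T} \<subseteq> {S. S \<subseteq> U \<and> card S = m \<and> T \<subseteq> S}"
    proof clarify
      fix R assume R: "R \<subseteq> U - T" "card R = m - card T"
      then have "finite R" using assms(1) finite_subset by blast
      then have "card (R \<union> T) = card R + card T" using R \<open>finite T\<close> by (subst card_Un_disjoint) auto
      then show "R \<union> T \<subseteq> U \<and> card (R \<union> T) = m \<and> T \<subseteq> R \<union> T" using R True assms by auto
    qed
  qed auto
  then have "card {S. S \<subseteq> U \<and> card S = m \<and> T \<subseteq> S} = card {R. R \<subseteq> U - T \<and> card R = m - card T}"
    by (rule bij_betw_same_card)
  also have "\<dots> = card (U - T) choose (m - card T)" using assms by (simp add: n_subsets)
  finally show ?thesis using True assms \<open>finite T\<close> by (simp add: card_Diff_subset)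
next
  case False
  have "card T \<le> card S" if "S \<subseteq> U" "T \<subseteq> S" for S
    using that assms by (meson card_mono finite_subset)
  then have "{S. S \<subseteq> U \<and> card S = m \<and> T \<subseteq> S} = {}" using False by fastforce
  then show ?thesis using False by (simp only: card.empty if_False)
qed

definition incl_prob :: "nat \<Rightarrow> nat \<Rightarrow> nat \<Rightarrow> real" where
  "incl_prob n m t = (\<Prod>r<t. (real m - real r) / (real n - real r))"

lemma binomial_ratio_eq_incl_prob:
  assumes "m \<le> n"
  shows "real (if t \<le> m then (n - t) choose (m - t) else 0) / real (n choose m) = incl_prob n m t"
proof (cases "t \<le> m")
  case True
  then show ?thesis
  proof (induction t)
    case 0
    then show ?case using assms by (simp add: incl_prob_def)
  next
    case (Suc t)
    then have "t < m" "t < n" using assms by auto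
    have "m - t > 0" using \<open>t < m\<close> by simp
    from times_binomial_minus1_eq[OF this, of "n - t"]
    have "(m - t) * ((n - t) choose (m - t)) = (n - t) * ((n - Suc t) choose (m - Suc t))"
      by simp
    then have "real (m - t) * real ((n - t) choose (m - t)) = real (n - t) * real ((n - Suc t) choose (m - Suc t))"
      by (simp only: of_nat_mult [symmetric])
    then have step: "real ((n - Suc t) choose (m - Suc t))
        = (real m - real t) / (real n - real t) * real ((n - t) choose (m - t))"
      using \<open>t < m\<close> \<open>t < n\<close> by (simp add: of_nat_diff field_simps)
    have "real (if Suc t \<le> m then (n - Suc t) choose (m - Suc t) else 0) / real (n choose m)
        = (real m - real t) / (real n - real t)
          * (real (if t \<le> m then (n - t) choose (m - t) else 0) / real (n choose m))"
      using Suc.prems \<open>t < m\<close> by (simp add: step)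
    also have "\<dots> = incl_prob n m (Suc t)"
      using Suc by (simp add: incl_prob_def)
    finally show ?case .
  qed
next
  case False
  then have "incl_prob n m t = 0"
    unfolding incl_prob_def by (intro prod_zero) auto
  then show ?thesis using False by simp
qed

lemma prob_pmf_of_set_subsets_superset:
  assumes "finite U" "T \<subseteq> U" "m \<le> card U"
  shows "measure_pmf.prob (pmf_of_set {S. S \<subseteq> U \<and> card S = m}) {S. T \<subseteq> S}
     = incl_prob (card U) m (card T)"
proof -
  let ?X = "{S. S \<subseteq> U \<and> card S = m}"
  have card_X: "card ?X = card U choose m" using assms by (simp add: n_subsets)
  moreover have "card U choose m > 0" using assms by simp
  ultimately have "?X \<noteq> {}" "finite ?X" by (metis card_gt_0_iff)+
  then have "measure_pmf.prob (pmf_of_set ?X) {S. T \<subseteq> S} = card (?X \<inter> {S. T \<subseteq> S}) / card ?X"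
    by (rule measure_pmf_of_set)
  also have "?X \<inter> {S. T \<subseteq> S} = {S. S \<subseteq> U \<and> card S = m \<and> T \<subseteq> S}" by auto
  also have "real (card {S. S \<subseteq> U \<and> card S = m \<and> T \<subseteq> S}) / card ?X
      = real (if card T \<le> m then (card U - card T) choose (m - card T) else 0) / real (card U choose m)"
    by (simp only: card_subsets_superset[OF assms(1,2)] card_X)
  also have "\<dots> = incl_prob (card U) m (card T)"
    by (rule binomial_ratio_eq_incl_prob) (rule assms(3))
  finally show ?thesis .
qed

lemma incl_prob_inequalities:
  assumes "2 \<le> m" "m + 3 \<le> n"
  defines "a \<equiv> incl_prob n m"
  shows "0 < a 2" "a 2 \<le> a 1" "a 1 \<le> 1" "0 \<le> a 3" "a 3 \<le> a 2" "a 1 * a 3 \<le> (a 2)\<^sup>2"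
    "(2 * a 1 - 1) * a 2 \<le> a 3" "(2 * a 1 - 1) * a 1 \<le> a 2"
proof -
  define r1 where "r1 = real m / real n"
  define r2 where "r2 = (real m - 1) / (real n - 1)"
  define r3 where "r3 = (real m - 2) / (real n - 2)"
  have a: "a 1 = r1" "a 2 = r1 * r2" "a 3 = r1 * r2 * r3"
    by (simp_all add: a_def r1_def r2_def r3_def incl_prob_def numeral_eq_Suc)
  have M: "2 \<le> real m" "real m + 3 \<le> real n" using assms(1,2) by linarith+
  have r1: "0 < r1" "r1 \<le> 1" using M by (auto simp: r1_def divide_simps)
  have r2: "0 < r2" "r2 \<le> r1" using M by (auto simp: r1_def r2_def divide_simps algebra_simps)
  have r3: "0 \<le> r3" "r3 \<le> r2" using M by (auto simp: r2_def r3_def divide_simps algebra_simps)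
  have "2 * r1 - 1 \<le> r2"
  proof -
    have "0 \<le> (real n - real m) * (real n - 2)" using M by simp
    then show ?thesis using M by (simp add: r1_def r2_def divide_simps algebra_simps)
  qed
  moreover have "2 * r1 - 1 \<le> r3"
  proof -
    have "0 \<le> (real n - real m) * (real n - 4)" using M by simp
    then show ?thesis using M by (simp add: r1_def r3_def divide_simps algebra_simps)
  qed
  ultimately show "0 < a 2" "a 2 \<le> a 1" "a 1 \<le> 1" "0 \<le> a 3" "a 3 \<le> a 2" "a 1 * a 3 \<le> (a 2)\<^sup>2"
    "(2 * a 1 - 1) * a 2 \<le> a 3" "(2 * a 1 - 1) * a 1 \<le> a 2"
    using r1 r2 r3 unfolding a
    by (auto simp: power2_eq_square mult_left_le mult.assoc intro!: mult_left_mono mult_right_mono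
        mult_le_one)
qed

text \<open>With a1, a2, a3 the values of incl_prob (d - 1) (k - 1) at 1, 2, 3 and s, t, u the first-index
  weights of distinct i, j, l, the fraction below is P({i,j,l} \<subseteq> B) / (P({i,j} \<subseteq> B) P({i,l} \<subseteq> B))
  under SAMPLING.\<close>

lemma triple_ratio_bound:
  fixes a1 a2 a3 s t u :: real
  assumes a2_pos: "0 < a2" and "a2 \<le> a1" "a1 \<le> 1" "0 \<le> a3" "a3 \<le> a2"
    and log_concave: "a1 * a3 \<le> a2\<^sup>2"
    and "(2 * a1 - 1) * a2 \<le> a3" "(2 * a1 - 1) * a1 \<le> a2"
    and "0 \<le> s" "0 \<le> t" "0 \<le> u" "s + t + u \<le> 1"
  shows "\<bar>(a3 + (s + t + u) * (a2 - a3)) / ((a2 + (s + t) * (a1 - a2)) * (a2 + (s + u) * (a1 - a2))) - 1\<bar>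
         \<le> 1 / a1 - 1"
proof -
  define Q where "Q = s + t + u"
  define P where "P = a3 + Q * (a2 - a3)"
  define p1 where "p1 = a2 + (s + t) * (a1 - a2)"
  define p2 where "p2 = a2 + (s + u) * (a1 - a2)"
  have "a2 \<le> p1" "a2 \<le> p2" using assms by (simp_all add: p1_def p2_def)
  have "(s + u) * (a1 - a2) \<le> 1 * (a1 - a2)" using assms by (intro mult_right_mono) auto
  then have "p2 \<le> a1" by (simp add: p2_def)
  have "0 < a1" "0 < p1 * p2" using a2_pos \<open>a2 \<le> a1\<close> \<open>a2 \<le> p1\<close> \<open>a2 \<le> p2\<close> by auto
  have "0 \<le> Q" "Q \<le> 1" using assms by (auto simp: Q_def)
  have product_ge: "a2\<^sup>2 + a2 * (a1 - a2) * Q \<le> p1 * p2"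
  proof -
    have "p1 * p2 = a2\<^sup>2 + a2 * (a1 - a2) * (2 * s + t + u) + (a1 - a2)\<^sup>2 * ((s + t) * (s + u))"
      by (simp add: p1_def p2_def power2_eq_square algebra_simps)
    moreover have "a2 * (a1 - a2) * Q \<le> a2 * (a1 - a2) * (2 * s + t + u)"
      using assms by (intro mult_left_mono) (auto simp: Q_def)
    moreover have "0 \<le> (a1 - a2)\<^sup>2 * ((s + t) * (s + u))" using assms by simp
    ultimately show ?thesis by linarith
  qed
  have "P * a1 \<le> p1 * p2"
  proof -
    have "0 \<le> (a2\<^sup>2 - a1 * a3) * (1 - Q)" using log_concave \<open>Q \<le> 1\<close> by simp
    then have "P * a1 \<le> a2\<^sup>2 + a2 * (a1 - a2) * Q"
      by (simp add: P_def power2_eq_square algebra_simps)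
    then show ?thesis using product_ge by linarith
  qed
  then have upper: "P / (p1 * p2) \<le> 1 / a1"
    using \<open>0 < p1 * p2\<close> \<open>0 < a1\<close> by (simp add: divide_simps mult.commute)
  have "(2 - 1 / a1) * (p1 * p2) \<le> P"
  proof (cases "2 * a1 - 1 \<le> 0")
    case True
    then have "2 - 1 / a1 \<le> 0" using \<open>0 < a1\<close> by (simp add: divide_simps)
    moreover have "0 \<le> P" using assms \<open>0 \<le> Q\<close> \<open>Q \<le> 1\<close> by (simp add: P_def)
    ultimately show ?thesis using \<open>0 < p1 * p2\<close> by (meson order.trans mult_nonpos_nonneg less_imp_le)
  next
    case False
    have "(2 - 1 / a1) * (p1 * p2) \<le> ((2 - 1 / a1) * p1) * a1"
      using False \<open>p2 \<le> a1\<close> \<open>a2 \<le> p1\<close> a2_pos \<open>0 < a1\<close>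
      by (simp only: mult.assoc[symmetric]) (intro mult_left_mono, auto simp: divide_simps)
    also have "\<dots> = (1 - (s + t)) * ((2 * a1 - 1) * a2) + (s + t) * ((2 * a1 - 1) * a1)"
      using \<open>0 < a1\<close> by (simp add: p1_def field_simps)
    also have "\<dots> \<le> (1 - (s + t)) * a3 + (s + t) * a2"
      using assms by (intro add_mono mult_left_mono) auto
    also have "\<dots> \<le> P"
    proof -
      have "(s + t) * (a2 - a3) \<le> Q * (a2 - a3)" using assms by (intro mult_right_mono) (auto simp: Q_def)
      then show ?thesis by (simp add: P_def algebra_simps)
    qed
    finally show ?thesis .
  qed
  then have lower: "2 - 1 / a1 \<le> P / (p1 * p2)"
    using \<open>0 < p1 * p2\<close> by (simp add: divide_simps)
  from upper lower show ?thesis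
    unfolding P_def p1_def p2_def Q_def by linarith
qed

section \<open>The distribution SAMPLING\<close>

lemma measure_bind_pmf:
  "measure_pmf.prob (bind_pmf M f) X = (\<integral>x. measure_pmf.prob (f x) X \<partial>measure_pmf M)"
  unfolding measure_pmf_bind
  using measurable_measure_pmf[of f]
  by (subst measure_pmf.measure_bind[where N="count_space UNIV"]) auto

lemma l1norm_pos:
  assumes "\<exists>j\<in>{1..d}. w j \<noteq> 0"
  shows "l1norm d w > 0"
proof -
  obtain j where j: "j \<in> {1..d}" "w j \<noteq> 0" using assms by blast
  then have "0 < \<bar>w j\<bar>" by simp
  also have "\<dots> \<le> l1norm d w"
    unfolding l1norm_def using j by (intro member_le_sum) auto
  finally show ?thesis .
qed

lemma sum_abs_div_l1norm:
  assumes "\<exists>j\<in>{1..d}. w j \<noteq> 0"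
  shows "(\<Sum>j\<in>{1..d}. \<bar>w j\<bar> / l1norm d w) = 1"
  using l1norm_pos[OF assms] by (simp add: l1norm_def flip: sum_divide_distrib)

lemma pmf_first_index:
  assumes "\<exists>j\<in>{1..d}. w j \<noteq> 0"
  shows "pmf (first_index d w) a = (if a \<in> {1..d} then \<bar>w a\<bar> / l1norm d w else 0)"
proof -
  define f where "f = (\<lambda>i. if i \<in> {1..d} then \<bar>w i\<bar> / l1norm d w else 0)"
  have nonneg: "\<And>x. 0 \<le> f x" unfolding f_def using l1norm_pos[OF assms] by auto
  have "(\<integral>\<^sup>+x. ennreal (f x) \<partial>count_space UNIV) = (\<Sum>x\<in>{1..d}. ennreal (f x))"
    by (rule nn_integral_count_space') (auto simp: f_def)
  also have "\<dots> = ennreal (\<Sum>x\<in>{1..d}. f x)" using nonneg by (simp add: sum_ennreal)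
  also have "(\<Sum>x\<in>{1..d}. f x) = 1" unfolding f_def using sum_abs_div_l1norm[OF assms] by simp
  finally show ?thesis
    unfolding first_index_def f_def[symmetric] using pmf_embed_pmf[of f, OF nonneg] by (simp add: f_def)
qed

lemma set_pmf_first_index:
  assumes "\<exists>j\<in>{1..d}. w j \<noteq> 0"
  shows "set_pmf (first_index d w) \<subseteq> {1..d}"
  using pmf_first_index[OF assms] by (auto simp: set_pmf_iff split: if_splits)

lemma sum_weighted_card_Diff_singleton:
  fixes q g :: "nat \<Rightarrow> real"
  assumes "finite U" "T \<subseteq> U" "(\<Sum>a\<in>U. q a) = 1"
  shows "(\<Sum>a\<in>U. q a * g (card (T - {a})))
    = g (card T) + (\<Sum>a\<in>T. q a) * (g (card T - 1) - g (card T))"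
proof -
  have "finite T" using assms finite_subset by blast
  have "(\<Sum>a\<in>U. q a * g (card (T - {a})))
      = (\<Sum>a\<in>U. q a * g (card T) + (if a \<in> T then q a * (g (card T - 1) - g (card T)) else 0))"
    by (intro sum.cong refl) (auto simp: \<open>finite T\<close> algebra_simps)
  also have "\<dots> = (\<Sum>a\<in>U. q a) * g (card T) + (\<Sum>a\<in>U \<inter> T. q a * (g (card T - 1) - g (card T)))"
    by (subst sum.inter_restrict[OF assms(1)]) (simp add: sum.distrib sum_distrib_right)
  also have "U \<inter> T = T" using assms by auto
  finally show ?thesis using assms by (simp add: sum_distrib_right)
qed

lemma prob_SAMPLING_superset:
  assumes "\<exists>j\<in>{1..d}. w j \<noteq> 0" "T \<subseteq> {1..d}" "k \<le> d"
  shows "measure_pmf.prob (SAMPLING k d w) {B. T \<subseteq> B}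
    = incl_prob (d - 1) (k - 1) (card T) + (\<Sum>a\<in>T. \<bar>w a\<bar> / l1norm d w)
      * (incl_prob (d - 1) (k - 1) (card T - 1) - incl_prob (d - 1) (k - 1) (card T))"
proof -
  have inner: "measure_pmf.prob (map_pmf (insert a) (pmf_of_set {S. S \<subseteq> {1..d} - {a} \<and> card S = k - 1}))
      {B. T \<subseteq> B} = incl_prob (d - 1) (k - 1) (card (T - {a}))" if "a \<in> {1..d}" for a
  proof -
    have "insert a -` {B. T \<subseteq> B} = {S. T - {a} \<subseteq> S}" by auto
    moreover have "card ({1..d} - {a}) = d - 1" using that by simp
    ultimately show ?thesis
      using that assms(2,3) by (simp add: prob_pmf_of_set_subsets_superset Diff_mono)
  qed
  have "measure_pmf.prob (SAMPLING k d w) {B. T \<subseteq> B} = (\<integral>a. measure_pmf.prob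
      (map_pmf (insert a) (pmf_of_set {S. S \<subseteq> {1..d} - {a} \<and> card S = k - 1})) {B. T \<subseteq> B}
      \<partial>measure_pmf (first_index d w))"
    unfolding SAMPLING_def by (rule measure_bind_pmf)
  also have "\<dots> = (\<Sum>a\<in>{1..d}. pmf (first_index d w) a * measure_pmf.prob
      (map_pmf (insert a) (pmf_of_set {S. S \<subseteq> {1..d} - {a} \<and> card S = k - 1})) {B. T \<subseteq> B})"
    using set_pmf_first_index[OF assms(1)] by (subst integral_measure_pmf[of "{1..d}"]) (auto simp: mult.commute)
  also have "\<dots> = (\<Sum>a\<in>{1..d}. \<bar>w a\<bar> / l1norm d w * incl_prob (d - 1) (k - 1) (card (T - {a})))"
    by (intro sum.cong refl) (simp only: inner pmf_first_index[OF assms(1)] if_True)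
  also have "\<dots> = incl_prob (d - 1) (k - 1) (card T) + (\<Sum>a\<in>T. \<bar>w a\<bar> / l1norm d w)
      * (incl_prob (d - 1) (k - 1) (card T - 1) - incl_prob (d - 1) (k - 1) (card T))"
    by (rule sum_weighted_card_Diff_singleton[OF _ assms(2) sum_abs_div_l1norm[OF assms(1)]]) simp
  finally show ?thesis .
qed

section \<open>Moments of the pair-inclusion estimator\<close>

lemma zvec_eq_sum:
  "zvec k d w x v B i = (\<Sum>j\<in>{1..d}. x i * x j * v j
     * (indicator {C. {i, j} \<subseteq> C} B / measure_pmf.prob (SAMPLING k d w) {C. {i, j} \<subseteq> C} - 1))"
proof -
  have "hmat k d w x B i j * v j - x i * x j * v j = x i * x j * v j
      * (indicator {C. {i, j} \<subseteq> C} B / measure_pmf.prob (SAMPLING k d w) {C. {i, j} \<subseteq> C} - 1)" for j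
    by (cases "i = j") (simp_all add: hmat_def indicator_def power2_eq_square algebra_simps)
  moreover have "zvec k d w x v B i = (\<Sum>j\<in>{1..d}. hmat k d w x B i j * v j - x i * x j * v j)"
    unfolding zvec_def sum_subtractf sum_distrib_left by (simp only: mult.assoc)
  ultimately show ?thesis
    by simp
qed

lemma expectation_square_pair_estimator:
  fixes M :: "'a set pmf" and c :: "'a \<Rightarrow> real" and i :: 'a
  defines "p j \<equiv> measure_pmf.prob M {B. {i, j} \<subseteq> B}"
  assumes "finite A" "\<forall>j\<in>A. p j \<noteq> 0"
  shows "measure_pmf.expectation M (\<lambda>B. (\<Sum>j\<in>A. c j * (indicator {B. {i, j} \<subseteq> B} B / p j - 1))\<^sup>2)
     = (\<Sum>j\<in>A. \<Sum>l\<in>A. c j * c l * (measure_pmf.prob M {B. {i, j, l} \<subseteq> B} / (p j * p l) - 1))"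
proof -
  let ?I = "\<lambda>T. indicator {B. T \<subseteq> B} :: 'a set \<Rightarrow> real"
  define f where "f j B = ?I {i, j} B / p j - 1" for j B
  have integrable: "integrable (measure_pmf M) (?I T)" for T
    by (rule integrable_real_indicator) (simp_all add: less_top[symmetric])
  have product: "(\<lambda>B. f j B * f l B)
      = (\<lambda>B. ?I {i, j, l} B / (p j * p l) - ?I {i, j} B / p j - ?I {i, l} B / p l + 1)"
    if "j \<in> A" "l \<in> A" for j l
    using that assms(3) by (intro ext) (simp add: f_def indicator_def field_simps)
  have product_integrable: "integrable (measure_pmf M) (\<lambda>B. f j B * f l B)" if "j \<in> A" "l \<in> A" for j l
    using that by (simp add: product integrable del: insert_subset)
  have product_expectation: "measure_pmf.expectation M (\<lambda>B. f j B * f l B)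
      = measure_pmf.prob M {B. {i, j, l} \<subseteq> B} / (p j * p l) - 1" if "j \<in> A" "l \<in> A" for j l
    using that assms(3) by (simp add: product integrable p_def del: insert_subset)
  have "(\<Sum>j\<in>A. c j * f j B)\<^sup>2 = (\<Sum>j\<in>A. \<Sum>l\<in>A. c j * c l * (f j B * f l B))" for B
    unfolding power2_eq_square sum_product by (simp add: mult_ac)
  then have "measure_pmf.expectation M (\<lambda>B. (\<Sum>j\<in>A. c j * f j B)\<^sup>2)
      = (\<Sum>j\<in>A. \<Sum>l\<in>A. c j * c l * measure_pmf.expectation M (\<lambda>B. f j B * f l B))"
    by (simp add: product_integrable)
  also have "\<dots> = (\<Sum>j\<in>A. \<Sum>l\<in>A. c j * c l * (measure_pmf.prob M {B. {i, j, l} \<subseteq> B} / (p j * p l) - 1))"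
    by (intro sum.cong refl) (simp add: product_expectation)
  finally show ?thesis
    by (simp only: f_def)
qed

lemma abs_sum_mult_le_l1norm:
  fixes c f v :: "nat \<Rightarrow> real"
  assumes "\<forall>j\<in>{1..d}. \<bar>c j\<bar> \<le> \<bar>v j\<bar>" "\<forall>j\<in>{1..d}. \<bar>f j\<bar> \<le> D"
  shows "\<bar>\<Sum>j\<in>{1..d}. c j * f j\<bar> \<le> D * l1norm d v"
proof -
  have "\<bar>\<Sum>j\<in>{1..d}. c j * f j\<bar> \<le> (\<Sum>j\<in>{1..d}. \<bar>c j * f j\<bar>)"
    by (rule sum_abs)
  also have "\<dots> \<le> (\<Sum>j\<in>{1..d}. \<bar>v j\<bar> * D)"
    using assms by (intro sum_mono) (auto simp: abs_mult intro!: mult_mono)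
  also have "\<dots> = l1norm d v * D"
    by (simp only: l1norm_def sum_distrib_right)
  finally show ?thesis
    by (simp only: mult.commute)
qed

lemma quadratic_form_le:
  fixes c v :: "nat \<Rightarrow> real" and R :: "nat \<Rightarrow> nat \<Rightarrow> real"
  assumes "\<forall>j\<in>{1..d}. \<bar>c j\<bar> \<le> \<bar>v j\<bar>"
    and "\<forall>j\<in>{1..d}. \<bar>R j j\<bar> \<le> \<alpha>"
    and "\<forall>j\<in>{1..d}. \<forall>l\<in>{1..d}. j \<noteq> l \<longrightarrow> \<bar>R j l\<bar> \<le> \<beta>"
  shows "(\<Sum>j\<in>{1..d}. \<Sum>l\<in>{1..d}. c j * c l * R j l)
    \<le> \<alpha> * l2norm_sq d v + \<beta> * ((l1norm d v)\<^sup>2 - l2norm_sq d v)"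
proof -
  have "c j * c l * R j l \<le> \<beta> * (\<bar>v j\<bar> * \<bar>v l\<bar>) + (if j = l then (\<alpha> - \<beta>) * (v j)\<^sup>2 else 0)"
    if "j \<in> {1..d}" "l \<in> {1..d}" for j l
  proof -
    have "c j * c l * R j l \<le> \<bar>c j\<bar> * \<bar>c l\<bar> * \<bar>R j l\<bar>"
      by (metis abs_ge_self abs_mult)
    also have "\<dots> \<le> \<bar>v j\<bar> * \<bar>v l\<bar> * (if j = l then \<alpha> else \<beta>)"
      using assms that by (intro mult_mono) auto
    finally have "c j * c l * R j l \<le> \<bar>v j\<bar> * \<bar>v l\<bar> * (if j = l then \<alpha> else \<beta>)" .
    then show ?thesis
      by (cases "j = l") (simp_all add: abs_mult_self_eq power2_eq_square algebra_simps)
  qed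
  then have "(\<Sum>j\<in>{1..d}. \<Sum>l\<in>{1..d}. c j * c l * R j l)
      \<le> (\<Sum>j\<in>{1..d}. \<Sum>l\<in>{1..d}. \<beta> * (\<bar>v j\<bar> * \<bar>v l\<bar>) + (if j = l then (\<alpha> - \<beta>) * (v j)\<^sup>2 else 0))"
    by (intro sum_mono) auto
  also have "\<dots> = (\<Sum>j\<in>{1..d}. \<beta> * (\<bar>v j\<bar> * l1norm d v) + (\<alpha> - \<beta>) * (v j)\<^sup>2)"
    by (intro sum.cong refl) (simp add: sum.distrib sum_distrib_left l1norm_def)
  also have "\<dots> = \<beta> * (l1norm d v)\<^sup>2 + (\<alpha> - \<beta>) * l2norm_sq d v"
    unfolding sum.distrib l2norm_sq_def power2_eq_square
    by (simp add: l1norm_def flip: sum_distrib_left sum_distrib_right)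
  finally show ?thesis by (simp add: algebra_simps)
qed

locale sampling_setting =
  fixes k d :: nat and w :: "nat \<Rightarrow> real"
  assumes k_ge_3: "3 \<le> k" and d_ge: "k + 3 \<le> d" and w_nonzero: "\<exists>j\<in>{1..d}. w j \<noteq> 0"
begin

abbreviation prob_superset :: "nat set \<Rightarrow> real" where
  "prob_superset T \<equiv> measure_pmf.prob (SAMPLING k d w) {B. T \<subseteq> B}"

abbreviation q :: "nat \<Rightarrow> real" where
  "q j \<equiv> \<bar>w j\<bar> / l1norm d w"

abbreviation incl :: "nat \<Rightarrow> real" where
  "incl \<equiv> incl_prob (d - 1) (k - 1)"

lemma q_nonneg: "0 \<le> q j"
  using l1norm_pos[OF w_nonzero] by simp

lemma prob_superset_eq:
  assumes "T \<subseteq> {1..d}"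
  shows "prob_superset T = incl (card T) + (\<Sum>j\<in>T. q j) * (incl (card T - 1) - incl (card T))"
  using prob_SAMPLING_superset[OF w_nonzero assms] d_ge by simp

lemma incl_inequalities:
  "0 < incl 2" "incl 2 \<le> incl 1" "incl 1 \<le> 1" "0 \<le> incl 3" "incl 3 \<le> incl 2"
  "incl 1 * incl 3 \<le> (incl 2)\<^sup>2" "(2 * incl 1 - 1) * incl 2 \<le> incl 3"
  "(2 * incl 1 - 1) * incl 1 \<le> incl 2"
  using incl_prob_inequalities[of "k - 1" "d - 1"] k_ge_3 d_ge by auto

lemma inverse_incl_1: "1 / incl 1 = real (d - 1) / real (k - 1)"
  by (simp add: incl_prob_def)

lemma inverse_incl_2: "1 / incl 2 = real (d - 1) * real (d - 2) / (real (k - 1) * real (k - 2))"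
  using k_ge_3 d_ge by (simp add: incl_prob_def numeral_eq_Suc of_nat_diff)

lemma prob_superset_singleton_ge:
  assumes "i \<in> {1..d}"
  shows "incl 1 \<le> prob_superset {i}"
proof -
  have "prob_superset {i} = incl 1 + q i * (1 - incl 1)"
    using prob_superset_eq[of "{i}"] assms by (simp add: incl_prob_def)
  moreover have "0 \<le> q i * (1 - incl 1)"
    using incl_inequalities(3) by (intro mult_nonneg_nonneg q_nonneg) simp
  ultimately show ?thesis by linarith
qed

lemma prob_superset_pair:
  assumes "i \<in> {1..d}" "j \<in> {1..d}" "i \<noteq> j"
  shows "prob_superset {i, j} = incl 2 + (q i + q j) * (incl 1 - incl 2)"
proof -
  have "card {i, j} = 2" "card {i, j} - 1 = 1" "(\<Sum>m\<in>{i, j}. q m) = q i + q j"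
    using assms(3) by simp_all
  then show ?thesis
    using prob_superset_eq[of "{i, j}"] assms(1,2) by (simp only:) simp
qed

lemma prob_superset_triple:
  assumes "i \<in> {1..d}" "j \<in> {1..d}" "l \<in> {1..d}" "i \<noteq> j" "i \<noteq> l" "j \<noteq> l"
  shows "prob_superset {i, j, l} = incl 3 + (q i + q j + q l) * (incl 2 - incl 3)"
proof -
  have "card {i, j, l} = 3" "card {i, j, l} - 1 = 2" "(\<Sum>m\<in>{i, j, l}. q m) = q i + q j + q l"
    using assms(4-6) by simp_all
  then show ?thesis
    using prob_superset_eq[of "{i, j, l}"] assms(1-3) by (simp only:) simp
qed

lemma prob_superset_pair_ge:
  assumes "i \<in> {1..d}" "j \<in> {1..d}"
  shows "incl 2 \<le> prob_superset {i, j}"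
proof (cases "i = j")
  case True
  then show ?thesis using prob_superset_singleton_ge[OF assms(1)] incl_inequalities(2) by simp
next
  case False
  have "0 \<le> (q i + q j) * (incl 1 - incl 2)"
    using incl_inequalities(2) by (intro mult_nonneg_nonneg add_nonneg_nonneg q_nonneg) simp
  then show ?thesis
    using prob_superset_pair[OF assms False] by linarith
qed

lemma prob_superset_pair_pos:
  assumes "i \<in> {1..d}" "j \<in> {1..d}"
  shows "0 < prob_superset {i, j}"
  using prob_superset_pair_ge[OF assms] incl_inequalities(1) by linarith

lemma inverse_prob_superset_pair_bounds:
  assumes "i \<in> {1..d}" "j \<in> {1..d}"
  shows "1 \<le> 1 / prob_superset {i, j}" "1 / prob_superset {i, j} \<le> 1 / incl 2"
proof -
  have "0 < incl 2" by (rule incl_inequalities(1))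
  moreover have "incl 2 \<le> prob_superset {i, j}" by (rule prob_superset_pair_ge[OF assms])
  moreover have "prob_superset {i, j} \<le> 1" by simp
  ultimately show "1 \<le> 1 / prob_superset {i, j}" "1 / prob_superset {i, j} \<le> 1 / incl 2"
    by (simp_all add: divide_simps)
qed

lemma pair_estimator_abs_le:
  assumes "i \<in> {1..d}" "j \<in> {1..d}"
  shows "\<bar>indicator {B. {i, j} \<subseteq> B} B / prob_superset {i, j} - 1\<bar> \<le> 1 / incl 2"
  using inverse_prob_superset_pair_bounds[OF assms]
  by (cases "{i, j} \<subseteq> B") (simp_all only: indicator_simps mem_Collect_eq, auto)

lemma diagonal_ratio_bound:
  assumes "i \<in> {1..d}" "j \<in> {1..d}"
  shows "\<bar>prob_superset {i, j, j} / (prob_superset {i, j} * prob_superset {i, j}) - 1\<bar> \<le> 1 / incl 2 - 1"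
proof -
  have "prob_superset {i, j} \<noteq> 0"
    using prob_superset_pair_pos[OF assms] by simp
  then have "prob_superset {i, j, j} / (prob_superset {i, j} * prob_superset {i, j}) = 1 / prob_superset {i, j}"
    by simp
  then show ?thesis
    using inverse_prob_superset_pair_bounds[OF assms] by simp
qed

lemma off_diagonal_ratio_bound:
  assumes "i \<in> {1..d}" "j \<in> {1..d}" "l \<in> {1..d}" "j \<noteq> l"
  shows "\<bar>prob_superset {i, j, l} / (prob_superset {i, j} * prob_superset {i, l}) - 1\<bar> \<le> 1 / incl 1 - 1"
proof (cases "i = j \<or> i = l")
  case True
  have "prob_superset {i} \<noteq> 0" "prob_superset {i, j} \<noteq> 0" "prob_superset {i, l} \<noteq> 0"
    using prob_superset_singleton_ge[of i] prob_superset_pair_pos[of i j] prob_superset_pair_pos[of i l]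
      incl_inequalities(1,2) assms by auto
  moreover have "{i, j, l} = {i, l} \<and> {i, j} = {i} \<or> {i, j, l} = {i, j} \<and> {i, l} = {i}"
    using True by auto
  ultimately have ratio: "prob_superset {i, j, l} / (prob_superset {i, j} * prob_superset {i, l})
      = 1 / prob_superset {i}"
    by (elim disjE conjE) (simp_all only:, simp_all)
  have "incl 1 \<le> prob_superset {i}" "prob_superset {i} \<le> 1"
    using prob_superset_singleton_ge[OF assms(1)] by simp_all
  then have "1 \<le> 1 / prob_superset {i}" "1 / prob_superset {i} \<le> 1 / incl 1"
    using incl_inequalities(1,2) by (simp_all add: divide_simps)
  then show ?thesis
    unfolding ratio abs_le_iff by (intro conjI) linarith+
next
  case False
  have "(\<Sum>m\<in>{i, j, l}. q m) \<le> (\<Sum>m\<in>{1..d}. q m)"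
    using assms q_nonneg by (intro sum_mono2) auto
  moreover have "i \<noteq> j" "i \<noteq> l" using False by auto
  ultimately have "q i + q j + q l \<le> 1" using assms(4) sum_abs_div_l1norm[OF w_nonzero] by simp
  then show ?thesis
    unfolding prob_superset_triple[OF assms(1-3) \<open>i \<noteq> j\<close> \<open>i \<noteq> l\<close> assms(4)]
      prob_superset_pair[OF assms(1,2) \<open>i \<noteq> j\<close>] prob_superset_pair[OF assms(1,3) \<open>i \<noteq> l\<close>]
    by (intro triple_ratio_bound incl_inequalities q_nonneg)
qed

end

theorem corollary2:
  fixes k d :: nat and w x v :: "nat \<Rightarrow> real" and i :: nat
  assumes "3 \<le> k" and "k + 3 \<le> d"
    and "\<exists>j\<in>{1..d}. w j \<noteq> 0"
    and "\<forall>j\<in>{1..d}. \<bar>x j\<bar> \<le> 1"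
    and "i \<in> {1..d}"
  shows "(\<forall>B\<in>set_pmf (SAMPLING k d w).
            \<bar>zvec k d w x v B i\<bar>
              \<le> (real (d - 1) * real (d - 2)) / (real (k - 1) * real (k - 2)) * l1norm d v)
       \<and> measure_pmf.expectation (SAMPLING k d w) (\<lambda>B. (zvec k d w x v B i)\<^sup>2)
           \<le> ((real (d - 1) * real (d - 2)) / (real (k - 1) * real (k - 2)) - 1) * l2norm_sq d v
             + (real (d - 1) / real (k - 1) - 1) * ((l1norm d v)\<^sup>2 - l2norm_sq d v)"
proof -
  interpret sampling_setting k d w
    using assms(1-3) by unfold_locales
  define c where "c j = x i * x j * v j" for j
  define f where "f j B = indicator {C. {i, j} \<subseteq> C} B / prob_superset {i, j} - 1" for j B
  have zvec: "zvec k d w x v B i = (\<Sum>j\<in>{1..d}. c j * f j B)" for B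
    unfolding zvec_eq_sum c_def f_def ..
  have c_le: "\<forall>j\<in>{1..d}. \<bar>c j\<bar> \<le> \<bar>v j\<bar>"
    using assms(4,5) by (auto simp: c_def abs_mult intro!: mult_left_le_one_le mult_le_one)
  have "\<bar>zvec k d w x v B i\<bar> \<le> 1 / incl 2 * l1norm d v" for B
    unfolding zvec using c_le pair_estimator_abs_le[OF assms(5)]
    by (intro abs_sum_mult_le_l1norm) (auto simp: f_def)
  moreover have "measure_pmf.expectation (SAMPLING k d w) (\<lambda>B. (zvec k d w x v B i)\<^sup>2)
      = (\<Sum>j\<in>{1..d}. \<Sum>l\<in>{1..d}. c j * c l * (prob_superset {i, j, l} / (prob_superset {i, j} * prob_superset {i, l}) - 1))"
    unfolding zvec f_def
    using prob_superset_pair_pos[OF assms(5)] by (intro expectation_square_pair_estimator) fastforce+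
  moreover have "\<dots> \<le> (1 / incl 2 - 1) * l2norm_sq d v + (1 / incl 1 - 1) * ((l1norm d v)\<^sup>2 - l2norm_sq d v)"
    using c_le diagonal_ratio_bound[OF assms(5)] off_diagonal_ratio_bound[OF assms(5)]
    by (intro quadratic_form_le) auto
  ultimately show ?thesis
    unfolding inverse_incl_1[symmetric] inverse_incl_2[symmetric] by auto
qed

end
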